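(* Every graph of pathwidth at most $1$ and order $n$ has at most $2^{n/2}$ minimal dominating sets. The bound is attained by the path on $2$ vertices.
   Context: A dominating set of $G=(V,E)$ is a set $D\subseteq V$ such that every vertex outside $D$ has a neighbour in $D$; it is minimal if no proper subset is dominating. Order = number of vertices; pathwidth is the standard notion. *)

theory Defs
  imports Complex_Main
begin

definition simple_graph :: "'a set \<Rightarrow> ('a \<Rightarrow> 'a \<Rightarrow> bool) \<Rightarrow> bool" where
  "simple_graph V E \<longleftrightarrow> finite V
     \<and> (\<forall>x y. E x y \<longrightarrow> x \<in> V \<and> y \<in> V)
     \<and> (\<forall>x y. E x y \<longrightarrow> E y x)
     \<and> (\<forall>x. \<not> E x x)"

definition dominating_set :: "'a set \<Rightarrow> ('a \<Rightarrow> 'a \<Rightarrow> bool) \<Rightarrow> 'a set \<Rightarrow> bool" where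
  "dominating_set V E D \<longleftrightarrow> D \<subseteq> V \<and> (\<forall>v \<in> V - D. \<exists>u \<in> D. E v u)"

definition minimal_dominating_set :: "'a set \<Rightarrow> ('a \<Rightarrow> 'a \<Rightarrow> bool) \<Rightarrow> 'a set \<Rightarrow> bool" where
  "minimal_dominating_set V E D \<longleftrightarrow> dominating_set V E D
     \<and> (\<forall>D'. D' \<subset> D \<longrightarrow> \<not> dominating_set V E D')"

definition path_decomposition :: "'a set \<Rightarrow> ('a \<Rightarrow> 'a \<Rightarrow> bool) \<Rightarrow> 'a set list \<Rightarrow> bool" where
  "path_decomposition V E Bs \<longleftrightarrow>
     (\<forall>B \<in> set Bs. B \<subseteq> V)
     \<and> (\<forall>v \<in> V. \<exists>B \<in> set Bs. v \<in> B)
     \<and> (\<forall>u v. E u v \<longrightarrow> (\<exists>B \<in> set Bs. u \<in> B \<and> v \<in> B))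
     \<and> (\<forall>v i j k. i \<le> j \<and> j \<le> k \<and> k < length Bs \<and> v \<in> Bs ! i \<and> v \<in> Bs ! k
          \<longrightarrow> v \<in> Bs ! j)"

text \<open>Width of a decomposition = max bag size minus 1; pathwidth = least width
(natural-number valued, so the null graph gets pathwidth 0).\<close>
definition pathwidth :: "'a set \<Rightarrow> ('a \<Rightarrow> 'a \<Rightarrow> bool) \<Rightarrow> nat" where
  "pathwidth V E = (LEAST k. \<exists>Bs. path_decomposition V E Bs
                        \<and> (\<forall>B \<in> set Bs. card B \<le> k + 1))"

end

theory Submission
  imports Defs
begin

text \<open>A graph of pathwidth at most one has a path decomposition with bags of at most two vertices.
  Its first vertex \<open>b\<close> always admits a reduction: there is an isolated vertex other than \<open>b\<close>,
  or a pendant vertex attached to \<open>b\<close>, or \<open>b\<close> is isolated, or \<open>b\<close> has a unique neighbour \<open>c\<close>,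
  which is then the first vertex of a decomposition of the graph without \<open>b\<close>. Minimal dominating
  sets are counted together with partial solutions that may fail domination or minimality at \<open>b\<close>,
  split into six classes by the state of \<open>b\<close>. Each reduction deletes one vertex and maps every
  class injectively into classes of the smaller graph, so the six counts are bounded linearly by
  those of the smaller graph. Nine linear inequalities with right-hand side \<open>2^(n/2)\<close> are
  preserved by all four reductions, and the first of them bounds the number of minimal dominating
  sets.\<close>

section \<open>Private neighbours and partial solutions\<close>

definition dominated :: "('a \<Rightarrow> 'a \<Rightarrow> bool) \<Rightarrow> 'a set \<Rightarrow> 'a \<Rightarrow> bool" where
  "dominated E D v \<longleftrightarrow> v \<in> D \<or> (\<exists>u\<in>D. E v u)"

definition private_nbr :: "'a set \<Rightarrow> ('a \<Rightarrow> 'a \<Rightarrow> bool) \<Rightarrow> 'a set \<Rightarrow> 'a \<Rightarrow> 'a \<Rightarrow> bool" where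
  "private_nbr V E D w u \<longleftrightarrow> w \<in> V \<and> (w = u \<or> E w u) \<and> (\<forall>u'\<in>D. (w = u' \<or> E w u') \<longrightarrow> u' = u)"

lemma private_nbr_mono:
  "private_nbr V E D w u \<Longrightarrow> w \<in> V' \<Longrightarrow> D' \<subseteq> D \<Longrightarrow> private_nbr V' E D' w u"
  by (auto simp: private_nbr_def)

lemma private_nbr_Diff:
  "private_nbr V E D w u \<Longrightarrow> w \<noteq> x \<Longrightarrow> private_nbr (V - {x}) E (D - {x}) w u"
  by (auto simp: private_nbr_def)

lemma minimal_dominating_set_iff_private:
  "minimal_dominating_set V E D \<longleftrightarrow>
     D \<subseteq> V \<and> (\<forall>v\<in>V. dominated E D v) \<and> (\<forall>u\<in>D. \<exists>w. private_nbr V E D w u)"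
proof
  assume "minimal_dominating_set V E D"
  hence dom: "dominating_set V E D" and minimal: "\<And>D'. D' \<subset> D \<Longrightarrow> \<not> dominating_set V E D'"
    by (auto simp: minimal_dominating_set_def)
  have DV: "D \<subseteq> V" and all_dom: "\<forall>v\<in>V. dominated E D v"
    using dom by (auto simp: dominating_set_def dominated_def)
  have "\<exists>w. private_nbr V E D w u" if "u \<in> D" for u
  proof -
    have "\<not> dominating_set V E (D - {u})" using minimal \<open>u \<in> D\<close> by blast
    then obtain w where w: "w \<in> V" "w \<notin> D - {u}" "\<not> (\<exists>u'\<in>D - {u}. E w u')"
      using DV by (auto simp: dominating_set_def)
    have "w = u \<or> E w u"
      using w all_dom \<open>u \<in> D\<close> by (auto simp: dominated_def)
    hence "private_nbr V E D w u" using w unfolding private_nbr_def by blast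
    thus ?thesis by blast
  qed
  thus "D \<subseteq> V \<and> (\<forall>v\<in>V. dominated E D v) \<and> (\<forall>u\<in>D. \<exists>w. private_nbr V E D w u)"
    using DV all_dom by blast
next
  assume a: "D \<subseteq> V \<and> (\<forall>v\<in>V. dominated E D v) \<and> (\<forall>u\<in>D. \<exists>w. private_nbr V E D w u)"
  have "\<not> dominating_set V E D'" if "D' \<subset> D" for D'
  proof
    assume dom': "dominating_set V E D'"
    obtain u where u: "u \<in> D" "u \<notin> D'" using \<open>D' \<subset> D\<close> by blast
    then obtain w where w: "private_nbr V E D w u" using a by blast
    have "\<exists>u'\<in>D'. w = u' \<or> E w u'"
      using dom' w by (auto simp: dominating_set_def private_nbr_def)
    thus False using w u \<open>D' \<subset> D\<close> unfolding private_nbr_def by blast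
  qed
  thus "minimal_dominating_set V E D"
    using a by (auto simp: minimal_dominating_set_def dominating_set_def dominated_def)
qed

definition mds_except :: "'a set \<Rightarrow> ('a \<Rightarrow> 'a \<Rightarrow> bool) \<Rightarrow> 'a \<Rightarrow> 'a set \<Rightarrow> bool" where
  "mds_except V E b D \<longleftrightarrow> D \<subseteq> V \<and> (\<forall>v\<in>V. v \<noteq> b \<longrightarrow> dominated E D v)
     \<and> (\<forall>u\<in>D. u \<noteq> b \<longrightarrow> (\<exists>w. private_nbr V E D w u))"

definition sole_private_nbr :: "'a set \<Rightarrow> ('a \<Rightarrow> 'a \<Rightarrow> bool) \<Rightarrow> 'a set \<Rightarrow> 'a \<Rightarrow> bool" where
  "sole_private_nbr V E D w \<longleftrightarrow>
     (\<exists>u\<in>D. private_nbr V E D w u \<and> (\<forall>w'. private_nbr V E D w' u \<longrightarrow> w' = w))"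

definition "in_ext V E b =
  {D. mds_except V E b D \<and> b \<in> D \<and> (\<exists>w. w \<noteq> b \<and> private_nbr V E D w b)}"
definition "in_self V E b =
  {D. mds_except V E b D \<and> b \<in> D \<and> \<not> (\<exists>w. w \<noteq> b \<and> private_nbr V E D w b) \<and> private_nbr V E D b b}"
definition "in_none V E b =
  {D. mds_except V E b D \<and> b \<in> D \<and> \<not> (\<exists>w. private_nbr V E D w b)}"
definition "out_undom V E b =
  {D. mds_except V E b D \<and> b \<notin> D \<and> \<not> dominated E D b}"
definition "out_sole V E b =
  {D. mds_except V E b D \<and> b \<notin> D \<and> dominated E D b \<and> sole_private_nbr V E D b}"
definition "out_free V E b =
  {D. mds_except V E b D \<and> b \<notin> D \<and> dominated E D b \<and> \<not> sole_private_nbr V E D b}"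

lemmas class_defs = in_ext_def in_self_def in_none_def out_undom_def out_sole_def out_free_def

lemma mds_except_of_class:
  "D \<in> in_ext V E b \<Longrightarrow> mds_except V E b D" "D \<in> in_self V E b \<Longrightarrow> mds_except V E b D"
  "D \<in> in_none V E b \<Longrightarrow> mds_except V E b D" "D \<in> out_undom V E b \<Longrightarrow> mds_except V E b D"
  "D \<in> out_sole V E b \<Longrightarrow> mds_except V E b D" "D \<in> out_free V E b \<Longrightarrow> mds_except V E b D"
  by (simp_all add: class_defs)

lemma mem_in_classes:
  "mds_except V E b D \<Longrightarrow> b \<in> D \<Longrightarrow> D \<in> in_ext V E b \<union> in_self V E b \<union> in_none V E b"
  by (auto simp: class_defs)

lemma finite_classes:
  assumes "finite V"
  shows "finite (in_ext V E b)" "finite (in_self V E b)" "finite (in_none V E b)"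
    "finite (out_undom V E b)" "finite (out_sole V E b)" "finite (out_free V E b)"
    "finite {D. minimal_dominating_set V E D}"
proof -
  have "finite S" if "\<forall>D\<in>S. D \<subseteq> V" for S :: "'a set set"
    using that assms by (intro finite_subset[of S "Pow V"]) auto
  thus "finite (in_ext V E b)" "finite (in_self V E b)" "finite (in_none V E b)"
    "finite (out_undom V E b)" "finite (out_sole V E b)" "finite (out_free V E b)"
    "finite {D. minimal_dominating_set V E D}"
    by (simp_all add: class_defs mds_except_def minimal_dominating_set_iff_private)
qed

lemma card_mds_le_classes:
  assumes "finite V" "b \<in> V"
  shows "card {D. minimal_dominating_set V E D}
    \<le> card (in_ext V E b) + card (in_self V E b) + card (out_sole V E b) + card (out_free V E b)"
proof -
  have "{D. minimal_dominating_set V E D}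
      \<subseteq> ((in_ext V E b \<union> in_self V E b) \<union> out_sole V E b) \<union> out_free V E b"
  proof
    fix D assume "D \<in> {D. minimal_dominating_set V E D}"
    hence "D \<subseteq> V" "\<forall>v\<in>V. dominated E D v" "\<forall>u\<in>D. \<exists>w. private_nbr V E D w u"
      by (auto simp: minimal_dominating_set_iff_private)
    thus "D \<in> ((in_ext V E b \<union> in_self V E b) \<union> out_sole V E b) \<union> out_free V E b"
      using \<open>b \<in> V\<close> by (auto simp: class_defs mds_except_def)
  qed
  hence "card {D. minimal_dominating_set V E D}
      \<le> card (((in_ext V E b \<union> in_self V E b) \<union> out_sole V E b) \<union> out_free V E b)"
    using finite_classes[OF \<open>finite V\<close>] by (intro card_mono) auto
  also have "\<dots> \<le> card (in_ext V E b) + card (in_self V E b) + card (out_sole V E b) + card (out_free V E b)"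
    by (meson add_mono_thms_linordered_semiring(3) card_Un_le order_trans)
  finally show ?thesis .
qed

lemma card_le_by_removal:
  assumes "finite T" "\<forall>D\<in>S. x \<in> D" "\<And>D. D \<in> S \<Longrightarrow> D - {x} \<in> T"
  shows "card S \<le> card T"
proof (rule card_inj_on_le[OF _ _ \<open>finite T\<close>])
  show "inj_on (\<lambda>D. D - {x}) S" using assms(2) by (intro inj_onI) (metis insert_Diff)
qed (use assms(3) in auto)

lemma card_le_by_subset:
  assumes "finite A" "finite B" "S \<subseteq> A \<union> B"
  shows "card S \<le> card A + card B"
  using card_mono[OF _ assms(3)] card_Un_le[of A B] assms(1,2) by simp

section \<open>Deleting a vertex\<close>

locale isolated_removal =
  fixes V E b x
  assumes sym: "\<And>p q. E p q \<Longrightarrow> E q p"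
    and b_in: "b \<in> V" and x_in: "x \<in> V" and x_ne: "x \<noteq> b" and isolated: "\<And>w. w \<in> V \<Longrightarrow> \<not> E x w"
begin

lemma private_nbr_Diff_iff:
  assumes "y \<in> V - {x}"
  shows "private_nbr (V - {x}) E (D - {x}) w y \<longleftrightarrow> private_nbr V E D w y"
  using assms isolated sym unfolding private_nbr_def by blast

lemma mds_except_Diff:
  assumes "mds_except V E b D"
  shows "x \<in> D" "mds_except (V - {x}) E b (D - {x})"
proof -
  have DV: "D \<subseteq> V" using assms by (simp add: mds_except_def)
  show "x \<in> D"
    using assms x_in x_ne isolated DV unfolding mds_except_def dominated_def by blast
  have "dominated E (D - {x}) v" if "v \<in> V - {x}" "v \<noteq> b" for v
    using assms that isolated sym unfolding mds_except_def dominated_def by blast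
  moreover have "\<exists>w. private_nbr (V - {x}) E (D - {x}) w u" if "u \<in> D - {x}" "u \<noteq> b" for u
    using assms that DV private_nbr_Diff_iff[of u] unfolding mds_except_def by blast
  ultimately show "mds_except (V - {x}) E b (D - {x})"
    using DV unfolding mds_except_def by blast
qed

lemma sole_private_nbr_Diff_iff:
  assumes "D \<subseteq> V"
  shows "sole_private_nbr (V - {x}) E (D - {x}) b \<longleftrightarrow> sole_private_nbr V E D b"
proof -
  have "sole_private_nbr (V - {x}) E (D - {x}) b
      \<longleftrightarrow> (\<exists>u\<in>D - {x}. private_nbr V E D b u \<and> (\<forall>w'. private_nbr V E D w' u \<longrightarrow> w' = b))"
  proof -
    have "private_nbr (V - {x}) E (D - {x}) w u \<longleftrightarrow> private_nbr V E D w u" if "u \<in> D - {x}" for w u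
      using that assms by (intro private_nbr_Diff_iff) blast
    thus ?thesis unfolding sole_private_nbr_def by blast
  qed
  also have "\<dots> \<longleftrightarrow> sole_private_nbr V E D b"
  proof -
    have "\<not> private_nbr V E D b x" using isolated sym b_in x_ne by (auto simp: private_nbr_def)
    thus ?thesis unfolding sole_private_nbr_def by blast
  qed
  finally show ?thesis .
qed

lemma Diff_mem_classes:
  assumes "mds_except V E b D"
  shows "D \<in> in_ext V E b \<Longrightarrow> D - {x} \<in> in_ext (V - {x}) E b"
    "D \<in> in_self V E b \<Longrightarrow> D - {x} \<in> in_self (V - {x}) E b"
    "D \<in> in_none V E b \<Longrightarrow> D - {x} \<in> in_none (V - {x}) E b"
    "D \<in> out_undom V E b \<Longrightarrow> D - {x} \<in> out_undom (V - {x}) E b"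
    "D \<in> out_sole V E b \<Longrightarrow> D - {x} \<in> out_sole (V - {x}) E b"
    "D \<in> out_free V E b \<Longrightarrow> D - {x} \<in> out_free (V - {x}) E b"
proof -
  have "b \<in> V - {x}" using b_in x_ne by blast
  note private_b = private_nbr_Diff_iff[OF this]
  have dom_b: "dominated E (D - {x}) b \<longleftrightarrow> dominated E D b"
    using isolated sym b_in x_ne unfolding dominated_def by blast
  have sole_b: "sole_private_nbr (V - {x}) E (D - {x}) b \<longleftrightarrow> sole_private_nbr V E D b"
    using assms sole_private_nbr_Diff_iff by (simp add: mds_except_def)
  note facts = mds_except_Diff(2)[OF assms] private_b dom_b sole_b x_ne
  show "D \<in> in_ext V E b \<Longrightarrow> D - {x} \<in> in_ext (V - {x}) E b"
    "D \<in> in_self V E b \<Longrightarrow> D - {x} \<in> in_self (V - {x}) E b"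
    "D \<in> in_none V E b \<Longrightarrow> D - {x} \<in> in_none (V - {x}) E b"
    "D \<in> out_undom V E b \<Longrightarrow> D - {x} \<in> out_undom (V - {x}) E b"
    "D \<in> out_sole V E b \<Longrightarrow> D - {x} \<in> out_sole (V - {x}) E b"
    "D \<in> out_free V E b \<Longrightarrow> D - {x} \<in> out_free (V - {x}) E b"
    using facts by (simp_all add: class_defs)
qed

lemma card_classes_le:
  assumes "finite V"
  shows "card (in_ext V E b) \<le> card (in_ext (V - {x}) E b)"
    "card (in_self V E b) \<le> card (in_self (V - {x}) E b)"
    "card (in_none V E b) \<le> card (in_none (V - {x}) E b)"
    "card (out_undom V E b) \<le> card (out_undom (V - {x}) E b)"
    "card (out_sole V E b) \<le> card (out_sole (V - {x}) E b)"
    "card (out_free V E b) \<le> card (out_free (V - {x}) E b)"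
proof -
  have card_le: "card C \<le> card C'"
    if "finite C'" "\<And>D. D \<in> C \<Longrightarrow> mds_except V E b D"
      "\<And>D. mds_except V E b D \<Longrightarrow> D \<in> C \<Longrightarrow> D - {x} \<in> C'" for C C'
    using that mds_except_Diff(1) by (intro card_le_by_removal) auto
  note F = finite_classes[OF finite_Diff[OF \<open>finite V\<close>, of "{x}"]]
  show "card (in_ext V E b) \<le> card (in_ext (V - {x}) E b)"
    by (rule card_le[OF F(1) mds_except_of_class(1) Diff_mem_classes(1)])
  show "card (in_self V E b) \<le> card (in_self (V - {x}) E b)"
    by (rule card_le[OF F(2) mds_except_of_class(2) Diff_mem_classes(2)])
  show "card (in_none V E b) \<le> card (in_none (V - {x}) E b)"
    by (rule card_le[OF F(3) mds_except_of_class(3) Diff_mem_classes(3)])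
  show "card (out_undom V E b) \<le> card (out_undom (V - {x}) E b)"
    by (rule card_le[OF F(4) mds_except_of_class(4) Diff_mem_classes(4)])
  show "card (out_sole V E b) \<le> card (out_sole (V - {x}) E b)"
    by (rule card_le[OF F(5) mds_except_of_class(5) Diff_mem_classes(5)])
  show "card (out_free V E b) \<le> card (out_free (V - {x}) E b)"
    by (rule card_le[OF F(6) mds_except_of_class(6) Diff_mem_classes(6)])
qed

end

locale pendant_removal =
  fixes V E b l
  assumes sym: "\<And>p q. E p q \<Longrightarrow> E q p"
    and b_in: "b \<in> V" and l_in: "l \<in> V" and l_ne: "l \<noteq> b" and E_lb: "E l b"
    and pendant: "\<And>w. w \<in> V \<Longrightarrow> E l w \<Longrightarrow> w = b"
begin

lemma pendant_sym: "w \<in> V \<Longrightarrow> E w l \<Longrightarrow> w = b"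
  using pendant sym by blast

lemma mds_except_Diff:
  assumes "mds_except V E b D"
  shows "mds_except (V - {l}) E b (D - {l})"
proof -
  have "\<exists>w. private_nbr (V - {l}) E (D - {l}) w u" if u: "u \<in> D - {l}" "u \<noteq> b" for u
  proof -
    obtain w where w: "private_nbr V E D w u" using assms u by (auto simp: mds_except_def)
    have "u \<in> V" using assms u by (auto simp: mds_except_def)
    hence "w \<noteq> l" using w u pendant unfolding private_nbr_def by blast
    thus ?thesis using private_nbr_Diff[OF w] by blast
  qed
  thus ?thesis
    using assms pendant_sym unfolding mds_except_def dominated_def by blast
qed

lemma pendant_notin:
  assumes "mds_except V E b D" "b \<in> D"
  shows "l \<notin> D"
proof
  assume "l \<in> D"
  then obtain w where "private_nbr V E D w l" using assms l_ne by (auto simp: mds_except_def)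
  thus False using assms E_lb l_ne pendant_sym unfolding private_nbr_def by metis
qed

lemma pendant_in:
  assumes "mds_except V E b D" "b \<notin> D"
  shows "l \<in> D"
  using assms l_in l_ne pendant unfolding mds_except_def dominated_def by blast

lemma in_ext_subset:
  "in_ext V E b \<subseteq> in_ext (V - {l}) E b \<union> in_self (V - {l}) E b \<union> in_none (V - {l}) E b"
proof
  fix D assume D: "D \<in> in_ext V E b"
  hence "mds_except V E b D" "b \<in> D" by (auto simp: in_ext_def)
  moreover have "D - {l} = D" using pendant_notin[OF calculation] by blast
  ultimately show "D \<in> in_ext (V - {l}) E b \<union> in_self (V - {l}) E b \<union> in_none (V - {l}) E b"
    using mds_except_Diff mem_in_classes by metis
qed

lemma in_self_empty: "in_self V E b = {}" and in_none_empty: "in_none V E b = {}"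
proof -
  have "private_nbr V E D l b" if "mds_except V E b D" "b \<in> D" for D
    using pendant_notin[OF that] that l_in E_lb pendant
    unfolding private_nbr_def mds_except_def by blast
  thus "in_self V E b = {}" "in_none V E b = {}"
    using l_ne by (auto simp: in_self_def in_none_def)
qed

lemma out_undom_empty: "out_undom V E b = {}"
  using pendant_in sym E_lb by (auto simp: out_undom_def dominated_def)

text \<open>As \<open>l \<in> D\<close> is adjacent to \<open>b\<close>, \<open>b\<close> can only be a private neighbour of \<open>l\<close>, and \<open>l\<close>
  is its own private neighbour.\<close>
lemma out_sole_empty: "out_sole V E b = {}"
proof -
  have "\<not> sole_private_nbr V E D b" if "mds_except V E b D" "b \<notin> D" for D
  proof
    assume "sole_private_nbr V E D b"
    then obtain u where u: "u \<in> D" "private_nbr V E D b u" "\<forall>w'. private_nbr V E D w' u \<longrightarrow> w' = b"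
      unfolding sole_private_nbr_def by blast
    have l: "l \<in> D" by (rule pendant_in[OF that])
    hence "u = l" using u(2) sym E_lb unfolding private_nbr_def by blast
    moreover have "private_nbr V E D l l"
      using l l_in pendant that unfolding private_nbr_def mds_except_def by blast
    ultimately show False using u(3) l_ne by blast
  qed
  thus ?thesis by (auto simp: out_sole_def)
qed

lemma out_free_Diff:
  assumes "D \<in> out_free V E b"
  shows "D - {l} \<in> out_undom (V - {l}) E b \<union> out_free (V - {l}) E b"
proof -
  have p: "mds_except V E b D" and b: "b \<notin> D" using assms by (auto simp: out_free_def)
  have "\<not> sole_private_nbr (V - {l}) E (D - {l}) b"
  proof
    assume "sole_private_nbr (V - {l}) E (D - {l}) b"
    then obtain u where u: "u \<in> D - {l}" "private_nbr (V - {l}) E (D - {l}) b u"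
      and only: "\<forall>w'. private_nbr (V - {l}) E (D - {l}) w' u \<longrightarrow> w' = b"
      unfolding sole_private_nbr_def by blast
    obtain w where w: "private_nbr V E D w u"
      using p u b by (auto simp: mds_except_def)
    have "w \<noteq> l" using w u pendant_in[OF p b] unfolding private_nbr_def by blast
    hence "private_nbr (V - {l}) E (D - {l}) w u" using private_nbr_Diff[OF w] by blast
    hence "w = b" using only by blast
    hence "u = l" using w pendant_in[OF p b] sym E_lb unfolding private_nbr_def by blast
    thus False using u by blast
  qed
  thus ?thesis
    using mds_except_Diff[OF p] b by (auto simp: out_undom_def out_free_def)
qed

lemma card_classes_le:
  assumes "finite V"
  shows "card (in_ext V E b)
      \<le> card (in_ext (V - {l}) E b) + card (in_self (V - {l}) E b) + card (in_none (V - {l}) E b)"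
    "card (out_free V E b) \<le> card (out_undom (V - {l}) E b) + card (out_free (V - {l}) E b)"
proof -
  note F = finite_classes[OF finite_Diff[OF \<open>finite V\<close>, of "{l}"]]
  have "card (in_ext V E b) \<le> card (in_ext (V - {l}) E b \<union> in_self (V - {l}) E b) + card (in_none (V - {l}) E b)"
    using F in_ext_subset by (intro card_le_by_subset) auto
  also have "\<dots> \<le> card (in_ext (V - {l}) E b) + card (in_self (V - {l}) E b) + card (in_none (V - {l}) E b)"
    by (simp add: card_Un_le)
  finally show "card (in_ext V E b)
      \<le> card (in_ext (V - {l}) E b) + card (in_self (V - {l}) E b) + card (in_none (V - {l}) E b)" .
  have "card (out_free V E b) \<le> card (out_undom (V - {l}) E b \<union> out_free (V - {l}) E b)"
  proof (rule card_le_by_removal)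
    show "\<forall>D\<in>out_free V E b. l \<in> D" using pendant_in by (auto simp: out_free_def)
  qed (use F out_free_Diff in auto)
  also have "\<dots> \<le> card (out_undom (V - {l}) E b) + card (out_free (V - {l}) E b)"
    by (rule card_Un_le)
  finally show "card (out_free V E b) \<le> card (out_undom (V - {l}) E b) + card (out_free (V - {l}) E b)" .
qed

end

locale pendant_boundary_removal =
  fixes V E b c
  assumes sym: "\<And>p q. E p q \<Longrightarrow> E q p"
    and b_in: "b \<in> V" and c_in: "c \<in> V" and c_ne: "c \<noteq> b" and E_bc: "E b c"
    and pendant: "\<And>w. w \<in> V \<Longrightarrow> E b w \<Longrightarrow> w = c"
begin

lemma pendant_sym: "w \<in> V \<Longrightarrow> E w b \<Longrightarrow> w = c"
  using pendant sym by blast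

lemma private_nbr_boundary: "private_nbr V E D b u \<Longrightarrow> u \<in> V \<Longrightarrow> u = b \<or> u = c"
  using pendant unfolding private_nbr_def by blast

lemma mds_except_Diff:
  assumes p: "mds_except V E b D"
  shows "mds_except (V - {b}) E c (D - {b})"
proof -
  have DV: "D \<subseteq> V" using p by (simp add: mds_except_def)
  have "\<exists>w. private_nbr (V - {b}) E (D - {b}) w u" if u: "u \<in> D - {b}" "u \<noteq> c" for u
  proof -
    obtain w where w: "private_nbr V E D w u" using p u by (auto simp: mds_except_def)
    have "w \<noteq> b" using private_nbr_boundary w u DV by blast
    thus ?thesis using private_nbr_Diff[OF w] by blast
  qed
  thus ?thesis
    using p DV pendant_sym unfolding mds_except_def dominated_def by blast
qed

lemma in_ext_Diff:
  assumes "D \<in> in_ext V E b"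
  shows "D - {b} \<in> out_undom (V - {b}) E c"
proof -
  obtain w where p: "mds_except V E b D" and w: "w \<noteq> b" "private_nbr V E D w b"
    using assms by (auto simp: in_ext_def)
  have "w = c" using w pendant_sym unfolding private_nbr_def by blast
  hence "c \<notin> D - {b}" "\<not> dominated E (D - {b}) c"
    using w unfolding private_nbr_def dominated_def by blast+
  thus ?thesis using mds_except_Diff[OF p] by (simp add: out_undom_def)
qed

lemma in_self_Diff:
  assumes "D \<in> in_self V E b"
  shows "D - {b} \<in> out_free (V - {b}) E c"
proof -
  have p: "mds_except V E b D" and b: "b \<in> D"
    and no_other: "\<forall>w. private_nbr V E D w b \<longrightarrow> w = b" and self: "private_nbr V E D b b"
    using assms by (auto simp: in_self_def)
  have c: "c \<notin> D" using self E_bc c_ne unfolding private_nbr_def by blast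
  have "\<not> private_nbr V E D c b" using no_other c_ne by blast
  then obtain u' where u': "u' \<in> D" "c = u' \<or> E c u'" "u' \<noteq> b"
    using c_in sym E_bc unfolding private_nbr_def by blast
  have dom: "dominated E (D - {b}) c" using u' c unfolding dominated_def by blast
  have "\<not> sole_private_nbr (V - {b}) E (D - {b}) c"
  proof
    assume "sole_private_nbr (V - {b}) E (D - {b}) c"
    then obtain u where u: "u \<in> D - {b}" "private_nbr (V - {b}) E (D - {b}) c u"
      and only: "\<forall>w'. private_nbr (V - {b}) E (D - {b}) w' u \<longrightarrow> w' = c"
      unfolding sole_private_nbr_def by blast
    obtain w where w: "private_nbr V E D w u" using p u by (auto simp: mds_except_def)
    have "u \<in> V" using u p by (auto simp: mds_except_def)
    hence "w \<noteq> b" using private_nbr_boundary w u c by blast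
    hence "w = c" using only private_nbr_Diff[OF w] by blast
    hence "u = b" using w b sym E_bc unfolding private_nbr_def by blast
    thus False using u by blast
  qed
  thus ?thesis using mds_except_Diff[OF p] c dom by (simp add: out_free_def)
qed

lemma in_none_Diff:
  assumes "D \<in> in_none V E b"
  shows "D - {b} \<in> in_ext (V - {b}) E c"
proof -
  have p: "mds_except V E b D" and b: "b \<in> D" and none: "\<forall>w. \<not> private_nbr V E D w b"
    using assms by (auto simp: in_none_def)
  have DV: "D \<subseteq> V" using p by (simp add: mds_except_def)
  have c: "c \<in> D"
    using none b_in pendant DV unfolding private_nbr_def by blast
  obtain w where w: "private_nbr V E D w c" using p c c_ne by (auto simp: mds_except_def)
  have "w \<noteq> b" "w \<noteq> c" using w b c_ne sym E_bc unfolding private_nbr_def by blast+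
  thus ?thesis
    using mds_except_Diff[OF p] c c_ne private_nbr_Diff[OF w] by (auto simp: in_ext_def)
qed

lemma out_undom_subset: "out_undom V E b \<subseteq> out_sole (V - {b}) E c \<union> out_free (V - {b}) E c"
proof
  fix D assume "D \<in> out_undom V E b"
  hence p: "mds_except V E b D" and b: "b \<notin> D" and undom: "\<not> dominated E D b"
    by (auto simp: out_undom_def)
  have "c \<notin> D" using undom E_bc unfolding dominated_def by blast
  moreover have "dominated E D c" using p c_in c_ne by (simp add: mds_except_def)
  moreover have "mds_except (V - {b}) E c D" using mds_except_Diff[OF p] b by simp
  ultimately show "D \<in> out_sole (V - {b}) E c \<union> out_free (V - {b}) E c"
    by (auto simp: out_sole_def out_free_def)
qed

lemma out_sole_subset: "out_sole V E b \<subseteq> in_none (V - {b}) E c"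
proof
  fix D assume "D \<in> out_sole V E b"
  hence p: "mds_except V E b D" and b: "b \<notin> D" and dom: "dominated E D b"
    and sole: "sole_private_nbr V E D b"
    by (auto simp: out_sole_def)
  have DV: "D \<subseteq> V" using p by (simp add: mds_except_def)
  have c: "c \<in> D" using dom b pendant DV unfolding dominated_def by blast
  obtain u where u: "u \<in> D" "private_nbr V E D b u" "\<forall>w'. private_nbr V E D w' u \<longrightarrow> w' = b"
    using sole unfolding sole_private_nbr_def by blast
  have "u = c" using private_nbr_boundary u DV b by blast
  hence "\<not> private_nbr (V - {b}) E D w c" for w
    using u(3) private_nbr_mono[of "V - {b}" E D w c V D] by (auto simp: private_nbr_def)
  thus "D \<in> in_none (V - {b}) E c"
    using mds_except_Diff[OF p] b c by (simp add: in_none_def)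
qed

lemma out_free_subset: "out_free V E b \<subseteq> in_ext (V - {b}) E c \<union> in_self (V - {b}) E c"
proof
  fix D assume "D \<in> out_free V E b"
  hence p: "mds_except V E b D" and b: "b \<notin> D" and dom: "dominated E D b"
    and not_sole: "\<not> sole_private_nbr V E D b"
    by (auto simp: out_free_def)
  have DV: "D \<subseteq> V" using p by (simp add: mds_except_def)
  have c: "c \<in> D" using dom b pendant DV unfolding dominated_def by blast
  have "private_nbr V E D b c" using b_in E_bc b pendant DV unfolding private_nbr_def by blast
  then obtain w where w: "w \<noteq> b" "private_nbr V E D w c"
    using not_sole c unfolding sole_private_nbr_def by blast
  hence "private_nbr (V - {b}) E D w c" using private_nbr_Diff[of V E D w c b] b by simp
  moreover have "mds_except (V - {b}) E c D" using mds_except_Diff[OF p] b by simp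
  ultimately show "D \<in> in_ext (V - {b}) E c \<union> in_self (V - {b}) E c"
    using c by (auto simp: in_ext_def in_self_def)
qed

lemma card_classes_le:
  assumes "finite V"
  shows "card (in_ext V E b) \<le> card (out_undom (V - {b}) E c)"
    "card (in_self V E b) \<le> card (out_free (V - {b}) E c)"
    "card (in_none V E b) \<le> card (in_ext (V - {b}) E c)"
    "card (out_undom V E b) \<le> card (out_sole (V - {b}) E c) + card (out_free (V - {b}) E c)"
    "card (out_sole V E b) \<le> card (in_none (V - {b}) E c)"
    "card (out_free V E b) \<le> card (in_ext (V - {b}) E c) + card (in_self (V - {b}) E c)"
proof -
  note F = finite_classes[OF finite_Diff[OF \<open>finite V\<close>, of "{b}"]]
  have b: "\<forall>D\<in>C. b \<in> D" if "C \<in> {in_ext V E b, in_self V E b, in_none V E b}" for C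
    using that by (auto simp: class_defs)
  show "card (in_ext V E b) \<le> card (out_undom (V - {b}) E c)"
    by (rule card_le_by_removal[OF F(4) b in_ext_Diff]) simp_all
  show "card (in_self V E b) \<le> card (out_free (V - {b}) E c)"
    by (rule card_le_by_removal[OF F(6) b in_self_Diff]) simp_all
  show "card (in_none V E b) \<le> card (in_ext (V - {b}) E c)"
    by (rule card_le_by_removal[OF F(1) b in_none_Diff]) simp_all
  show "card (out_undom V E b) \<le> card (out_sole (V - {b}) E c) + card (out_free (V - {b}) E c)"
    by (rule card_le_by_subset[OF F(5,6) out_undom_subset])
  show "card (out_sole V E b) \<le> card (in_none (V - {b}) E c)"
    by (rule card_mono[OF F(3) out_sole_subset])
  show "card (out_free V E b) \<le> card (in_ext (V - {b}) E c) + card (in_self (V - {b}) E c)"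
    by (rule card_le_by_subset[OF F(1,2) out_free_subset])
qed

end

locale isolated_boundary_removal =
  fixes V E b
  assumes sym: "\<And>p q. E p q \<Longrightarrow> E q p"
    and b_in: "b \<in> V" and isolated: "\<And>w. w \<in> V \<Longrightarrow> \<not> E b w"
begin

lemma minimal_dominating_set_Diff:
  assumes p: "mds_except V E b D"
  shows "minimal_dominating_set (V - {b}) E (D - {b})"
  unfolding minimal_dominating_set_iff_private
proof (intro conjI ballI)
  have DV: "D \<subseteq> V" using p by (simp add: mds_except_def)
  thus "D - {b} \<subseteq> V - {b}" by blast
  show "dominated E (D - {b}) v" if "v \<in> V - {b}" for v
    using p that isolated sym unfolding mds_except_def dominated_def by blast
  show "\<exists>w. private_nbr (V - {b}) E (D - {b}) w u" if u: "u \<in> D - {b}" for u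
  proof -
    obtain w where w: "private_nbr V E D w u" using p u by (auto simp: mds_except_def)
    have "w \<noteq> b" using w u DV isolated unfolding private_nbr_def by blast
    thus ?thesis using private_nbr_Diff[OF w] by blast
  qed
qed

lemma empty_classes:
  "in_ext V E b = {}" "in_none V E b = {}" "out_sole V E b = {}" "out_free V E b = {}"
proof -
  have "\<not> private_nbr V E D w b" if "w \<noteq> b" for D w
    using that isolated sym unfolding private_nbr_def by blast
  moreover have "private_nbr V E D b b" if "mds_except V E b D" for D
    using that b_in isolated unfolding private_nbr_def mds_except_def by blast
  moreover have "\<not> dominated E D b" if "mds_except V E b D" "b \<notin> D" for D
    using that isolated unfolding dominated_def mds_except_def by blast
  ultimately show "in_ext V E b = {}" "in_none V E b = {}" "out_sole V E b = {}" "out_free V E b = {}"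
    by (auto simp: class_defs)
qed

lemma card_classes_le:
  assumes "finite V"
  shows "card (in_self V E b) \<le> card {D. minimal_dominating_set (V - {b}) E D}"
    "card (out_undom V E b) \<le> card {D. minimal_dominating_set (V - {b}) E D}"
proof -
  note F = finite_classes(7)[OF finite_Diff[OF \<open>finite V\<close>, of "{b}"]]
  show "card (in_self V E b) \<le> card {D. minimal_dominating_set (V - {b}) E D}"
    by (rule card_le_by_removal[OF F]) (auto simp: in_self_def intro: minimal_dominating_set_Diff)
  have "minimal_dominating_set (V - {b}) E D" if "D \<in> out_undom V E b" for D
    using that minimal_dominating_set_Diff[of D] by (auto simp: out_undom_def)
  thus "card (out_undom V E b) \<le> card {D. minimal_dominating_set (V - {b}) E D}"
    by (intro card_mono[OF F]) blast
qed

end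

section \<open>Path decompositions of width one\<close>

text \<open>Edges are only required to be covered inside \<open>V\<close>: vertices are deleted from \<open>V\<close>
  while the edge relation \<open>E\<close> is kept unchanged.\<close>
definition width1_decomposition :: "'a set \<Rightarrow> ('a \<Rightarrow> 'a \<Rightarrow> bool) \<Rightarrow> 'a set list \<Rightarrow> bool" where
  "width1_decomposition V E Bs \<longleftrightarrow> (\<forall>B\<in>set Bs. B \<subseteq> V \<and> card B \<le> 2)
     \<and> (\<forall>v\<in>V. \<exists>B\<in>set Bs. v \<in> B)
     \<and> (\<forall>u\<in>V. \<forall>w\<in>V. E u w \<longrightarrow> (\<exists>B\<in>set Bs. u \<in> B \<and> w \<in> B))
     \<and> (\<forall>x i j k. i \<le> j \<and> j \<le> k \<and> k < length Bs \<and> x \<in> Bs ! i \<and> x \<in> Bs ! k \<longrightarrow> x \<in> Bs ! j)"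

definition end_vertex :: "'a set \<Rightarrow> ('a \<Rightarrow> 'a \<Rightarrow> bool) \<Rightarrow> 'a \<Rightarrow> bool" where
  "end_vertex V E b \<longleftrightarrow> b \<in> V \<and> (\<exists>Bs k. width1_decomposition V E Bs \<and> k < length Bs
     \<and> b \<in> Bs ! k \<and> (\<forall>i<k. Bs ! i \<subseteq> {b}))"

lemma width1_decomposition_Diff:
  assumes "finite V" and d: "width1_decomposition V E Bs"
  shows "width1_decomposition (V - R) E (map (\<lambda>B. B - R) Bs)"
  unfolding width1_decomposition_def
proof (intro conjI ballI allI impI)
  fix B' assume "B' \<in> set (map (\<lambda>B. B - R) Bs)"
  then obtain B where B: "B \<in> set Bs" "B' = B - R" by auto
  hence "B \<subseteq> V" "card B \<le> 2" using d by (auto simp: width1_decomposition_def)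
  moreover have "card (B - R) \<le> card B"
    using calculation(1) \<open>finite V\<close> by (intro card_mono) (auto intro: finite_subset)
  ultimately show "B' \<subseteq> V - R" "card B' \<le> 2" using B(2) by auto
next
  fix v assume "v \<in> V - R"
  thus "\<exists>B\<in>set (map (\<lambda>B. B - R) Bs). v \<in> B" using d by (fastforce simp: width1_decomposition_def)
next
  fix u w assume "u \<in> V - R" "w \<in> V - R" "E u w"
  thus "\<exists>B\<in>set (map (\<lambda>B. B - R) Bs). u \<in> B \<and> w \<in> B"
    using d by (fastforce simp: width1_decomposition_def)
next
  fix x i j k
  assume "i \<le> j \<and> j \<le> k \<and> k < length (map (\<lambda>B. B - R) Bs)
    \<and> x \<in> map (\<lambda>B. B - R) Bs ! i \<and> x \<in> map (\<lambda>B. B - R) Bs ! k"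
  thus "x \<in> map (\<lambda>B. B - R) Bs ! j"
    using d unfolding width1_decomposition_def by (metis DiffD1 DiffD2 DiffI le_less_trans length_map nth_map)
qed

lemma end_vertex_Diff:
  assumes "finite V" "end_vertex V E b" "x \<noteq> b"
  shows "end_vertex (V - {x}) E b"
proof -
  obtain Bs k where d: "width1_decomposition V E Bs" and k: "k < length Bs" "b \<in> Bs ! k"
    "\<forall>i<k. Bs ! i \<subseteq> {b}"
    using assms(2) unfolding end_vertex_def by blast
  show ?thesis
    unfolding end_vertex_def
    using assms k width1_decomposition_Diff[OF assms(1) d, of "{x}"]
    by (intro conjI exI[of _ "map (\<lambda>B. B - {x}) Bs"] exI[of _ k]) (auto simp: end_vertex_def)
qed

lemma end_vertex_exists:
  assumes "width1_decomposition V E Bs" "V \<noteq> {}"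
  obtains b where "end_vertex V E b"
proof -
  have ex: "\<exists>i. i < length Bs \<and> Bs ! i \<noteq> {}"
    using assms by (fastforce simp: width1_decomposition_def in_set_conv_nth)
  define k where "k = (LEAST i. i < length Bs \<and> Bs ! i \<noteq> {})"
  have k: "k < length Bs" "Bs ! k \<noteq> {}"
    using LeastI_ex[OF ex] unfolding k_def by auto
  have before: "\<forall>i<k. Bs ! i = {}"
    using not_less_Least k(1) unfolding k_def by fastforce
  obtain b where b: "b \<in> Bs ! k" using k by blast
  have "b \<in> V" using assms(1) b k(1) unfolding width1_decomposition_def by (meson nth_mem subsetD)
  thus ?thesis using that assms(1) k b before unfolding end_vertex_def by blast
qed

lemma bag_no_three:
  assumes "finite V" "width1_decomposition V E Bs" "i < length Bs"
    and "x \<in> Bs ! i" "y \<in> Bs ! i" "z \<in> Bs ! i" "x \<noteq> y" "x \<noteq> z" "y \<noteq> z"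
  shows False
proof -
  have "Bs ! i \<subseteq> V" "card (Bs ! i) \<le> 2"
    using assms(2,3) nth_mem unfolding width1_decomposition_def by blast+
  moreover have "card {x, y, z} \<le> card (Bs ! i)"
    using assms calculation(1) by (intro card_mono) (auto intro: finite_subset)
  ultimately show False using assms(7-9) by simp
qed

locale width1_end_decomposition =
  fixes V E Bs b k
  assumes finite: "finite V" and irrefl: "\<And>x. \<not> E x x" and sym: "\<And>p q. E p q \<Longrightarrow> E q p"
    and decomp: "width1_decomposition V E Bs"
    and k_less: "k < length Bs" and b_in_k: "b \<in> Bs ! k" and before_k: "\<forall>i<k. Bs ! i \<subseteq> {b}"
begin

lemma interval: "i \<le> j \<Longrightarrow> j \<le> l \<Longrightarrow> l < length Bs \<Longrightarrow> x \<in> Bs ! i \<Longrightarrow> x \<in> Bs ! l \<Longrightarrow> x \<in> Bs ! j"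
  using decomp unfolding width1_decomposition_def by blast

lemma edge_bag: "u \<in> V \<Longrightarrow> w \<in> V \<Longrightarrow> E u w \<Longrightarrow> \<exists>i<length Bs. u \<in> Bs ! i \<and> w \<in> Bs ! i"
  using decomp unfolding width1_decomposition_def by (metis in_set_conv_nth)

definition last_b :: nat where
  "last_b = Max {i. i < length Bs \<and> b \<in> Bs ! i}"

lemma last_b: "last_b < length Bs" "b \<in> Bs ! last_b" "k \<le> last_b"
  and last_b_max: "i < length Bs \<Longrightarrow> b \<in> Bs ! i \<Longrightarrow> i \<le> last_b"
proof -
  let ?S = "{i. i < length Bs \<and> b \<in> Bs ! i}"
  have S: "finite ?S" "k \<in> ?S" using k_less b_in_k by auto
  have "last_b \<in> ?S" unfolding last_b_def using S by (intro Max_in) auto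
  thus "last_b < length Bs" "b \<in> Bs ! last_b" by auto
  show "k \<le> last_b" "i < length Bs \<Longrightarrow> b \<in> Bs ! i \<Longrightarrow> i \<le> last_b"
    unfolding last_b_def using S by (auto intro: Max_ge)
qed

text \<open>Every bag between \<open>k\<close> and \<open>last_b\<close> contains \<open>b\<close>, hence at most one further
  vertex: a vertex not reaching beyond \<open>last_b\<close> can only be adjacent to \<open>b\<close>.\<close>
lemma confined_vertex_pendant:
  assumes "u \<in> V" "u \<noteq> b" "\<forall>i<length Bs. u \<in> Bs ! i \<longrightarrow> i \<le> last_b"
    and "w \<in> V" "E u w"
  shows "w = b"
proof (rule ccontr)
  assume "w \<noteq> b"
  obtain i where i: "i < length Bs" "u \<in> Bs ! i" "w \<in> Bs ! i" using edge_bag assms(1,4,5) by blast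
  have "k \<le> i" using before_k i(2) assms(2) by (meson in_mono not_le singletonD)
  hence "b \<in> Bs ! i" using interval[of k i last_b b] i assms(3) last_b b_in_k by blast
  moreover have "u \<noteq> w" using irrefl assms(5) by blast
  ultimately show False
    using bag_no_three[OF finite decomp i(1), of u w b] i assms(2) \<open>w \<noteq> b\<close> by blast
qed

lemma in_last_bag:
  assumes "u \<in> V" "u \<noteq> b" "w \<in> V" "E u w" "w \<noteq> b" "u \<in> Bs ! j" "j \<le> last_b"
  shows "u \<in> Bs ! last_b"
proof -
  obtain i where "i < length Bs" "last_b < i" "u \<in> Bs ! i"
    using confined_vertex_pendant[OF assms(1,2) _ assms(3,4)] assms(5) by (meson not_le)
  thus ?thesis using interval[of j last_b i u] assms(6,7) by simp
qed

lemma boundary_unique_neighbour: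
  assumes no_isolated: "\<forall>u\<in>V - {b}. \<exists>w\<in>V. E u w"
    and no_pendant: "\<forall>l\<in>V - {b}. E l b \<longrightarrow> (\<exists>w\<in>V. E l w \<and> w \<noteq> b)"
    and c: "c \<in> V" "E b c"
  shows "c \<noteq> b" "\<forall>w\<in>V. E b w \<longrightarrow> w = c" "end_vertex (V - {b}) E c"
proof -
  have b_V: "b \<in> V" using decomp k_less b_in_k unfolding width1_decomposition_def by (meson nth_mem subsetD)
  have "\<exists>w\<in>V. E u w \<and> w \<noteq> b" if "u \<in> V - {b}" for u
    using no_isolated no_pendant that by metis
  hence last: "u \<in> Bs ! last_b" if "u \<in> V - {b}" "u \<in> Bs ! j" "j \<le> last_b" for u j
    using in_last_bag that by blast
  have nbr_last: "w \<in> Bs ! last_b" "w \<noteq> b" if w: "w \<in> V" "E b w" for w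
  proof -
    show "w \<noteq> b" using irrefl w by blast
    obtain j where "j < length Bs" "b \<in> Bs ! j" "w \<in> Bs ! j" using edge_bag b_V w by blast
    thus "w \<in> Bs ! last_b" using last \<open>w \<noteq> b\<close> w last_b_max by blast
  qed
  show "c \<noteq> b" using nbr_last c by blast
  show "\<forall>w\<in>V. E b w \<longrightarrow> w = c"
    using nbr_last c bag_no_three[OF finite decomp last_b(1), of b c] last_b(2) by blast
  have "\<forall>i<last_b. map (\<lambda>B. B - {b}) Bs ! i \<subseteq> {c}"
  proof (intro allI impI subsetI)
    fix i u assume "i < last_b" "u \<in> map (\<lambda>B. B - {b}) Bs ! i"
    hence u: "u \<in> Bs ! i" "u \<noteq> b" "i < length Bs" using last_b(1) by auto
    hence "u \<in> V" using decomp unfolding width1_decomposition_def by (meson nth_mem subsetD)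
    hence "u \<in> Bs ! last_b" using last u \<open>i < last_b\<close> by simp
    thus "u \<in> {c}"
      using bag_no_three[OF finite decomp last_b(1), of b c u] last_b(2) nbr_last c u(2) by blast
  qed
  thus "end_vertex (V - {b}) E c"
    unfolding end_vertex_def
    using width1_decomposition_Diff[OF finite decomp, of "{b}"] last_b nbr_last c
    by (intro conjI exI[of _ "map (\<lambda>B. B - {b}) Bs"] exI[of _ last_b]) auto
qed

end

lemma end_vertex_cases:
  assumes "finite V" "\<And>x. \<not> E x x" "\<And>p q. E p q \<Longrightarrow> E q p" and "end_vertex V E b"
  obtains (isolated) u where "u \<in> V" "u \<noteq> b" "\<forall>w\<in>V. \<not> E u w"
  | (pendant) l where "l \<in> V" "l \<noteq> b" "E l b" "\<forall>w\<in>V. E l w \<longrightarrow> w = b"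
  | (isolated_boundary) "\<forall>w\<in>V. \<not> E b w"
  | (pendant_boundary) c where "c \<in> V" "c \<noteq> b" "E b c" "\<forall>w\<in>V. E b w \<longrightarrow> w = c"
      "end_vertex (V - {b}) E c"
proof -
  obtain Bs k where "width1_decomposition V E Bs" "k < length Bs" "b \<in> Bs ! k" "\<forall>i<k. Bs ! i \<subseteq> {b}"
    using assms(4) unfolding end_vertex_def by blast
  then interpret width1_end_decomposition V E Bs b k
    using assms(1-3) by unfold_locales
  consider (isolated) "\<exists>u\<in>V - {b}. \<forall>w\<in>V. \<not> E u w"
    | (pendant) "\<exists>l\<in>V - {b}. E l b \<and> (\<forall>w\<in>V. E l w \<longrightarrow> w = b)"
    | (isolated_boundary) "\<forall>w\<in>V. \<not> E b w"
    | (pendant_boundary) c where "c \<in> V" "E b c"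
      "\<forall>u\<in>V - {b}. \<exists>w\<in>V. E u w" "\<forall>l\<in>V - {b}. E l b \<longrightarrow> (\<exists>w\<in>V. E l w \<and> w \<noteq> b)"
    by blast
  thus ?thesis
  proof cases
    case (pendant_boundary c)
    thus ?thesis using that(4) boundary_unique_neighbour[OF pendant_boundary(3,4,1,2)] by blast
  qed (use that in blast)+
qed
section \<open>Counting\<close>

text \<open>\<open>a\<^sub>0, \<dots>, a\<^sub>5\<close> stand for the sizes of the six classes, in the order \<open>in_ext\<close>,
  \<open>in_self\<close>, \<open>in_none\<close>, \<open>out_undom\<close>, \<open>out_sole\<close>, \<open>out_free\<close>.\<close>
definition weights_bounded :: "real \<Rightarrow> real \<Rightarrow> real \<Rightarrow> real \<Rightarrow> real \<Rightarrow> real \<Rightarrow> real \<Rightarrow> bool" where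
  "weights_bounded a0 a1 a2 a3 a4 a5 H \<longleftrightarrow>
     a0 + a1 + a4 + a5 \<le> H \<and>
     a0 + a1 + a2 + a3 + a5 \<le> sqrt 2 * H \<and>
     a0 + a1/2 + a3/2 + a4/2 + a5 \<le> H \<and>
     a0 + a1 + a2/2 + a3 + a4/2 + a5 \<le> sqrt 2 * H \<and>
     3/4*a0 + a1/2 + a2/4 + a3/2 + a4/2 + a5 \<le> H \<and>
     5/4*a0 + a1 + a2/2 + 3/4*a3 + a4/2 + a5 \<le> sqrt 2 * H \<and>
     3/4*a0 + a1/2 + a2/4 + 5/8*a3 + 3/8*a4 + 7/8*a5 \<le> H \<and>
     9/8*a0 + 7/8*a1 + 3/8*a2 + 3/4*a3 + 5/8*a4 + 9/8*a5 \<le> sqrt 2 * H \<and>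
     3/4*a0 + 9/16*a1 + 5/16*a2 + 9/16*a3 + 3/8*a4 + 13/16*a5 \<le> H"

lemma sqrt2_scaling:
  assumes "0 \<le> (H::real)" "T = sqrt 2 * H"
  shows "5/4 * H \<le> T" "T \<le> 3/2 * H" "sqrt 2 * T = 2 * H"
proof -
  have "5/4 \<le> sqrt (2::real)" by (rule real_le_rsqrt) (simp add: power2_eq_square)
  from mult_right_mono[OF this assms(1)] show "5/4 * H \<le> T" using assms(2) by simp
  have "sqrt (2::real) \<le> sqrt ((3/2)\<^sup>2)" by (rule real_sqrt_le_mono) (simp add: power2_eq_square)
  from mult_right_mono[OF this assms(1)] show "T \<le> 3/2 * H" using assms(2) by simp
  show "sqrt 2 * T = 2 * H" using assms(2) by (simp add: mult.assoc[symmetric])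
qed

lemma weights_bounded_isolated_step:
  assumes "weights_bounded b0 b1 b2 b3 b4 b5 H" "0 \<le> H" "T = sqrt 2 * H"
    and "a0 \<le> b0" "a1 \<le> b1" "a2 \<le> b2" "a3 \<le> b3" "a4 \<le> b4" "a5 \<le> b5"
  shows "weights_bounded a0 a1 a2 a3 a4 a5 T"
  using assms sqrt2_scaling[OF assms(2,3)] unfolding weights_bounded_def by linarith

lemma weights_bounded_pendant_step:
  assumes "weights_bounded b0 b1 b2 b3 b4 b5 H" "0 \<le> H" "T = sqrt 2 * H"
    and "0 \<le> b0" "0 \<le> b1" "0 \<le> b2" "0 \<le> b3" "0 \<le> b4" "0 \<le> b5"
    and "a0 \<le> b0 + b1 + b2" "a1 \<le> 0" "a2 \<le> 0" "a3 \<le> 0" "a4 \<le> 0" "a5 \<le> b3 + b5"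
  shows "weights_bounded a0 a1 a2 a3 a4 a5 T"
  using assms sqrt2_scaling[OF assms(2,3)] unfolding weights_bounded_def by linarith

lemma weights_bounded_isolated_boundary_step:
  assumes "F \<le> H" "0 \<le> H" "T = sqrt 2 * H"
    and "a0 \<le> 0" "a1 \<le> F" "a2 \<le> 0" "a3 \<le> F" "a4 \<le> 0" "a5 \<le> 0"
  shows "weights_bounded a0 a1 a2 a3 a4 a5 T"
  using assms sqrt2_scaling[OF assms(2,3)] unfolding weights_bounded_def by linarith

lemma weights_bounded_pendant_boundary_step:
  assumes "weights_bounded b0 b1 b2 b3 b4 b5 H" "0 \<le> H" "T = sqrt 2 * H"
    and "0 \<le> b0" "0 \<le> b1" "0 \<le> b2" "0 \<le> b3" "0 \<le> b4" "0 \<le> b5"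
    and "a0 \<le> b3" "a1 \<le> b5" "a2 \<le> b0" "a3 \<le> b4 + b5" "a4 \<le> b2" "a5 \<le> b0 + b1"
  shows "weights_bounded a0 a1 a2 a3 a4 a5 T"
  using assms sqrt2_scaling[OF assms(2,3)] unfolding weights_bounded_def by linarith

definition classes_bounded :: "'a set \<Rightarrow> ('a \<Rightarrow> 'a \<Rightarrow> bool) \<Rightarrow> 'a \<Rightarrow> real \<Rightarrow> bool" where
  "classes_bounded V E b H \<longleftrightarrow> weights_bounded
     (card (in_ext V E b)) (card (in_self V E b)) (card (in_none V E b))
     (card (out_undom V E b)) (card (out_sole V E b)) (card (out_free V E b)) H"

lemma card_mds_le_of_classes_bounded:
  assumes "finite V" "b \<in> V" "classes_bounded V E b H"
  shows "real (card {D. minimal_dominating_set V E D}) \<le> H"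
  using card_mds_le_classes[OF assms(1,2), of E] assms(3)
  unfolding classes_bounded_def weights_bounded_def by linarith

lemma classes_bounded_step:
  assumes fin: "finite V" and irrefl: "\<And>x. \<not> E x x" and sym: "\<And>p q. E p q \<Longrightarrow> E q p"
    and end_b: "end_vertex V E b" and H: "0 \<le> H"
    and IH_mds: "\<And>x Bs. x \<in> V \<Longrightarrow> width1_decomposition (V - {x}) E Bs
        \<Longrightarrow> real (card {D. minimal_dominating_set (V - {x}) E D}) \<le> H"
    and IH_classes: "\<And>x c. x \<in> V \<Longrightarrow> end_vertex (V - {x}) E c \<Longrightarrow> classes_bounded (V - {x}) E c H"
  shows "classes_bounded V E b (sqrt 2 * H)"
proof -
  have b: "b \<in> V" using end_b by (simp add: end_vertex_def)
  consider (isolated) u where "u \<in> V" "u \<noteq> b" "\<forall>w\<in>V. \<not> E u w"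
    | (pendant) l where "l \<in> V" "l \<noteq> b" "E l b" "\<forall>w\<in>V. E l w \<longrightarrow> w = b"
    | (isolated_boundary) "\<forall>w\<in>V. \<not> E b w"
    | (pendant_boundary) c where "c \<in> V" "c \<noteq> b" "E b c" "\<forall>w\<in>V. E b w \<longrightarrow> w = c"
        "end_vertex (V - {b}) E c"
    by (rule end_vertex_cases[of V E b, OF fin irrefl sym end_b]) blast+
  thus ?thesis
  proof cases
    case (isolated u)
    interpret R: isolated_removal V E b u by unfold_locales (use sym isolated b in blast)+
    have "classes_bounded (V - {u}) E b H"
      using IH_classes isolated end_vertex_Diff[OF fin end_b] by blast
    thus ?thesis unfolding classes_bounded_def
      by (rule weights_bounded_isolated_step[OF _ H refl]) (use R.card_classes_le[OF fin] in simp_all)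
  next
    case (pendant l)
    interpret R: pendant_removal V E b l by unfold_locales (use sym pendant b in blast)+
    have "classes_bounded (V - {l}) E b H"
      using IH_classes pendant end_vertex_Diff[OF fin end_b] by blast
    thus ?thesis unfolding classes_bounded_def
      by (rule weights_bounded_pendant_step[OF _ H refl])
        (use R.card_classes_le[OF fin] in \<open>simp_all add: R.in_self_empty R.in_none_empty
          R.out_undom_empty R.out_sole_empty\<close>)
  next
    case isolated_boundary
    interpret R: isolated_boundary_removal V E b by unfold_locales (use sym isolated_boundary b in blast)+
    obtain Bs where "width1_decomposition V E Bs" using end_b unfolding end_vertex_def by blast
    hence "real (card {D. minimal_dominating_set (V - {b}) E D}) \<le> H"
      using IH_mds b width1_decomposition_Diff[OF fin] by blast
    thus ?thesis unfolding classes_bounded_def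
      by (rule weights_bounded_isolated_boundary_step[OF _ H refl])
        (use R.card_classes_le[OF fin] in \<open>simp_all add: R.empty_classes\<close>)
  next
    case (pendant_boundary c)
    interpret R: pendant_boundary_removal V E b c by unfold_locales (use sym pendant_boundary b in blast)+
    have "classes_bounded (V - {b}) E c H" using IH_classes b pendant_boundary(5) by blast
    thus ?thesis unfolding classes_bounded_def
      by (rule weights_bounded_pendant_boundary_step[OF _ H refl]) (use R.card_classes_le[OF fin] in simp_all)
  qed
qed

lemma card_mds_width1_le:
  fixes V :: "'a set"
  assumes "finite V" "\<And>x. \<not> E x x" "\<And>p q. E p q \<Longrightarrow> E q p"
  shows "(width1_decomposition V E Bs \<longrightarrow>
           real (card {D. minimal_dominating_set V E D}) \<le> 2 powr (card V / 2))
     \<and> (end_vertex V E b \<longrightarrow> classes_bounded V E b (2 powr (card V / 2)))"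
  using assms(1)
proof (induction "card V" arbitrary: V Bs b rule: less_induct)
  case less
  have step: "classes_bounded V E c (2 powr (card V / 2))" if end_c: "end_vertex V E c" for c
  proof -
    have "c \<in> V" using end_c by (simp add: end_vertex_def)
    hence "0 < card V" using less.prems card_gt_0_iff by blast
    hence pow: "(2::real) powr (card V / 2) = sqrt 2 * 2 powr ((card V - 1) / 2)"
      by (simp add: of_nat_diff powr_half_sqrt[symmetric] powr_add[symmetric] diff_divide_distrib)
    have card_Diff: "card (V - {x}) = card V - 1" "card (V - {x}) < card V" if "x \<in> V" for x
      using that less.prems by (auto simp: card_Diff_singleton card_gt_0_iff intro: diff_less)
    show ?thesis unfolding pow
      by (rule classes_bounded_step[OF less.prems assms(2,3) end_c])
        (use less.hyps[OF card_Diff(2)] card_Diff(1) less.prems in auto)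
  qed
  have "real (card {D. minimal_dominating_set V E D}) \<le> 2 powr (card V / 2)"
    if dec: "width1_decomposition V E Bs"
  proof (cases "V = {}")
    case True
    hence "{D. minimal_dominating_set V E D} = {{}}"
      by (auto simp: minimal_dominating_set_iff_private)
    thus ?thesis using True by simp
  next
    case False
    then obtain c where c: "end_vertex V E c" using end_vertex_exists[OF dec] by blast
    hence "c \<in> V" by (simp add: end_vertex_def)
    thus ?thesis using card_mds_le_of_classes_bounded[OF less.prems _ step[OF c]] by blast
  qed
  thus ?case using step by blast
qed

lemma width1_decomposition_if_pathwidth_le_1:
  assumes "simple_graph V E" "pathwidth V E \<le> 1"
  obtains Bs where "width1_decomposition V E Bs"
proof -
  let ?P = "\<lambda>k. \<exists>Bs. path_decomposition V E Bs \<and> (\<forall>B \<in> set Bs. card B \<le> k + 1)"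
  have "path_decomposition V E [V]"
    using assms(1) unfolding path_decomposition_def simple_graph_def by auto
  hence "?P (card V)" by auto
  hence "?P (pathwidth V E)" unfolding pathwidth_def by (rule LeastI)
  then obtain Bs where "path_decomposition V E Bs" "\<forall>B \<in> set Bs. card B \<le> pathwidth V E + 1"
    by blast
  hence "width1_decomposition V E Bs"
    using assms(2) unfolding path_decomposition_def width1_decomposition_def by fastforce
  thus ?thesis by (rule that)
qed

lemma card_mds_pathwidth_le_1:
  assumes "simple_graph V E" "pathwidth V E \<le> 1"
  shows "real (card {D. minimal_dominating_set V E D}) \<le> 2 powr (real (card V) / 2)"
proof -
  obtain Bs where "width1_decomposition V E Bs"
    using width1_decomposition_if_pathwidth_le_1[OF assms] .
  moreover have "finite V" "\<And>x. \<not> E x x" "\<And>p q. E p q \<Longrightarrow> E q p"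
    using assms(1) by (auto simp: simple_graph_def)
  ultimately show ?thesis using card_mds_width1_le[of V E] by blast
qed

lemma K2_minimal_dominating_sets:
  "{D. minimal_dominating_set {0::nat, 1} (\<lambda>x y. {x, y} = {0::nat, 1}) D} = {{0}, {1}}"
proof -
  have E: "{x, y} = {0::nat, 1} \<longleftrightarrow> x = 0 \<and> y = 1 \<or> x = 1 \<and> y = 0" for x y
    by (auto simp: doubleton_eq_iff)
  have "D = {0} \<or> D = {1}" if "minimal_dominating_set {0::nat, 1} (\<lambda>x y. {x, y} = {0::nat, 1}) D" for D
  proof -
    have D: "D \<subseteq> {0, 1}" "\<forall>v\<in>{0::nat, 1}. dominated (\<lambda>x y. {x, y} = {0::nat, 1}) D v"
      "\<forall>u\<in>D. \<exists>w. private_nbr {0, 1} (\<lambda>x y. {x, y} = {0::nat, 1}) D w u"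
      using that by (auto simp: minimal_dominating_set_iff_private)
    have "D \<noteq> {}" using D(2) by (auto simp: dominated_def)
    moreover have "\<not> (0 \<in> D \<and> 1 \<in> D)"
      using D(3) unfolding private_nbr_def E by auto
    ultimately show ?thesis using D(1) by auto
  qed
  moreover have "minimal_dominating_set {0::nat, 1} (\<lambda>x y. {x, y} = {0::nat, 1}) D"
    if "D = {0} \<or> D = {1}" for D
    using that unfolding minimal_dominating_set_iff_private dominated_def private_nbr_def E by auto
  ultimately show ?thesis by blast
qed

lemma K2_extremal:
  "let V = {0::nat, 1}; E = (\<lambda>x y. {x, y} = {0::nat, 1}) in
     simple_graph V E \<and> pathwidth V E \<le> 1 \<and>
     real (card {D. minimal_dominating_set V E D}) = 2 powr (real (card V) / 2)"
  unfolding Let_def K2_minimal_dominating_sets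
proof (intro conjI)
  show "simple_graph {0::nat, 1} (\<lambda>x y. {x, y} = {0::nat, 1})"
    unfolding simple_graph_def by (auto simp: doubleton_eq_iff)
  have "path_decomposition {0::nat, 1} (\<lambda>x y. {x, y} = {0::nat, 1}) [{0, 1}]"
    unfolding path_decomposition_def by (auto simp: doubleton_eq_iff)
  thus "pathwidth {0::nat, 1} (\<lambda>x y. {x, y} = {0::nat, 1}) \<le> 1"
    unfolding pathwidth_def by (intro Least_le) auto
qed simp

theorem mainTheorem7:
  shows "(\<forall>(V :: 'a set) E. simple_graph V E \<and> pathwidth V E \<le> 1 \<longrightarrow>
            real (card {D. minimal_dominating_set V E D}) \<le> 2 powr (real (card V) / 2))
       \<and> (let V = {0::nat, 1}; E = (\<lambda>x y. {x, y} = {0::nat, 1}) in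
            simple_graph V E \<and> pathwidth V E \<le> 1 \<and>
            real (card {D. minimal_dominating_set V E D}) = 2 powr (real (card V) / 2))"
  using card_mds_pathwidth_le_1 K2_extremal by blast

end
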